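(* Let $V$ and $Q$ be complex Hilbert spaces, $A\in L(V,V^* )$, $B\in L(V,Q^* )$, with associated sesquilinear forms $a(u,v)=\langle Au,v\rangle$ and $b(v,q)=\langle Bv,q\rangle$. Assume $\|a\|<\infty$ and $\alpha>0$, where $\|a\|$ and $\alpha$ are as defined in the context. Let $V_0=\ker B$, $V_1=V_0^\perp$ and let $A_{ij}\in L(V_j,V_i^* )$, $i,j\in\{0,1\}$, be defined by $\langle A_{ij}u,v\rangle=a(u,v)$ for all $u\in V_j$, $v\in V_i$ (so $A_{00}$ is an isomorphism from $V_0$ onto $V_0^*$). Then \[ \|A_{10}A_{00}^{-1}\|_{L(V_0^*,V_1^* )}\le\sqrt{\frac{\|a\|^2}{\alpha^2}-1},\qquad \|A_{00}^{-1}A_{01}\|_{L(V_1,V_0)}\le\sqrt{\frac{\|a\|^2}{\alpha^2}-1}, \] and \[ \|A_{11}-A_{10}A_{00}^{-1}A_{01}\|_{L(V_1,V_1^* )}\le\frac{\|a\|^2}{\alpha}. \]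
   Context: For a complex Hilbert space $H$, $H^*$ denotes the space of bounded antilinear functionals on $H$, $\langle\cdot,\cdot\rangle$ the duality pairing, and $L(H_1,H_2)$ the bounded linear operators. $V_0$, $V_1$ carry the inner product of $V$, and $V_i^*$ the corresponding dual norms. Definitions: $\|a\|=\sup_{0\ne u\in V}\sup_{0\ne v\in V}\frac{|a(u,v)|}{\|u\|_V\|v\|_V}$, $\alpha=\inf_{0\ne u\in\ker B}\sup_{0\ne v\in\ker B}\frac{|a(u,v)|}{\|u\|_V\|v\|_V}=\inf_{0\ne v\in\ker B}\sup_{0\ne u\in\ker B}\frac{|a(u,v)|}{\|u\|_V\|v\|_V}$ (both infima are assumed equal and positive). *)

theory Defs
  imports "HOL-Analysis.Analysis"
begin

text \<open>HOL-Analysis only provides real inner product spaces, so we introduce complex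
inner product spaces as a type class.\<close>

class complex_inner = real_normed_vector +
  fixes scaleC :: "complex \<Rightarrow> 'a \<Rightarrow> 'a"
    and cinner :: "'a \<Rightarrow> 'a \<Rightarrow> complex"
  assumes scaleC_add_right: "scaleC c (x + y) = scaleC c x + scaleC c y"
    and scaleC_add_left: "scaleC (c + d) x = scaleC c x + scaleC d x"
    and scaleC_scaleC: "scaleC c (scaleC d x) = scaleC (c * d) x"
    and scaleC_one: "scaleC 1 x = x"
    and scaleR_scaleC: "scaleR r x = scaleC (complex_of_real r) x"
    and cinner_commute: "cinner x y = cnj (cinner y x)"
    and cinner_add_left: "cinner (x + y) z = cinner x z + cinner y z"
    and cinner_scaleC_left: "cinner (scaleC c x) y = c * cinner x y"
    and cinner_self_real: "Im (cinner x x) = 0"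
    and cinner_self_nonneg: "0 \<le> Re (cinner x x)"
    and cinner_self_eq_zero: "cinner x x = 0 \<longleftrightarrow> x = 0"
    and norm_eq_sqrt_cinner: "norm x = sqrt (Re (cinner x x))"

class chilbert_space = complex_inner + complete_space

instantiation complex :: chilbert_space
begin
definition scaleC_complex :: "complex \<Rightarrow> complex \<Rightarrow> complex" where
  "scaleC_complex c x = c * x"
definition cinner_complex :: "complex \<Rightarrow> complex \<Rightarrow> complex" where
  "cinner_complex x y = x * cnj y"
instance
  apply standard
  apply (auto simp: scaleC_complex_def cinner_complex_def algebra_simps scaleR_conv_of_real
                    complex_norm_square cmod_def power2_eq_square)
  done
end

text \<open>Closed subspaces are represented as subsets of the ambient space.  A bounded
antilinear functional on a subspace S is a function that is additive and conjugate
homogeneous on S and bounded on S (its values outside S are irrelevant).\<close>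

definition antilinear_on :: "'a::complex_inner set \<Rightarrow> ('a \<Rightarrow> complex) \<Rightarrow> bool" where
  "antilinear_on S f \<longleftrightarrow>
     (\<forall>x\<in>S. \<forall>y\<in>S. f (x + y) = f x + f y) \<and> (\<forall>x\<in>S. \<forall>c. f (scaleC c x) = cnj c * f x)"

definition bounded_on :: "'a::complex_inner set \<Rightarrow> ('a \<Rightarrow> complex) \<Rightarrow> bool" where
  "bounded_on S f \<longleftrightarrow> (\<exists>K. \<forall>x\<in>S. cmod (f x) \<le> K * norm x)"

definition dual_space :: "'a::complex_inner set \<Rightarrow> ('a \<Rightarrow> complex) set" where
  "dual_space S = {f. antilinear_on S f \<and> bounded_on S f}"

text \<open>The dual norm on \<open>S\<^sup>*\<close> (with the convention that a supremum over the empty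
set, i.e. on the zero space, is 0).\<close>
definition dual_norm :: "'a::complex_inner set \<Rightarrow> ('a \<Rightarrow> complex) \<Rightarrow> real" where
  "dual_norm S f = Sup (insert 0 {cmod (f v) / norm v | v. v \<in> S \<and> v \<noteq> 0})"

text \<open>Operators in \<open>L(H1, H2\<^sup>*)\<close> written as maps \<open>A :: H1 \<Rightarrow> H2 \<Rightarrow> complex\<close>, \<open>A u\<close>
being the functional \<open>\<langle>A u, \<cdot>\<rangle>\<close>: linear in u, each \<open>A u\<close> antilinear, and bounded.\<close>
definition bounded_op_to_dual :: "('a::complex_inner \<Rightarrow> 'b::complex_inner \<Rightarrow> complex) \<Rightarrow> bool" where
  "bounded_op_to_dual A \<longleftrightarrow>
     (\<forall>u u' v. A (u + u') v = A u v + A u' v) \<and>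
     (\<forall>c u v. A (scaleC c u) v = c * A u v) \<and>
     (\<forall>u. antilinear_on UNIV (A u)) \<and>
     (\<exists>K. \<forall>u v. cmod (A u v) \<le> K * norm u * norm v)"

definition ker_op :: "('a::complex_inner \<Rightarrow> 'b::complex_inner \<Rightarrow> complex) \<Rightarrow> 'a set" where
  "ker_op B = {v. \<forall>q. B v q = 0}"

definition orth_compl :: "'a::complex_inner set \<Rightarrow> 'a set" where
  "orth_compl S = {v. \<forall>w\<in>S. cinner v w = 0}"

definition form_quotients :: "('a::complex_inner \<Rightarrow> 'a \<Rightarrow> complex) \<Rightarrow> real set" where
  "form_quotients a = {cmod (a u v) / (norm u * norm v) | u v. u \<noteq> 0 \<and> v \<noteq> 0}"

definition form_norm :: "('a::complex_inner \<Rightarrow> 'a \<Rightarrow> complex) \<Rightarrow> real" where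
  "form_norm a = Sup (insert 0 (form_quotients a))"

definition inf_sup_left :: "('a::complex_inner \<Rightarrow> 'a \<Rightarrow> complex) \<Rightarrow> 'a set \<Rightarrow> real" where
  "inf_sup_left a K =
     Inf {Sup (insert 0 {cmod (a u v) / (norm u * norm v) | v. v \<in> K \<and> v \<noteq> 0}) | u. u \<in> K \<and> u \<noteq> 0}"

definition inf_sup_right :: "('a::complex_inner \<Rightarrow> 'a \<Rightarrow> complex) \<Rightarrow> 'a set \<Rightarrow> real" where
  "inf_sup_right a K =
     Inf {Sup (insert 0 {cmod (a u v) / (norm u * norm v) | u. u \<in> K \<and> u \<noteq> 0}) | v. v \<in> K \<and> v \<noteq> 0}"

definition A00_inv :: "('a::complex_inner \<Rightarrow> 'a \<Rightarrow> complex) \<Rightarrow> 'a set \<Rightarrow> ('a \<Rightarrow> complex) \<Rightarrow> 'a" where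
  "A00_inv a V0 f = (THE u. u \<in> V0 \<and> (\<forall>v\<in>V0. a u v = f v))"

definition opnorm_dual_dual ::
  "'a::complex_inner set \<Rightarrow> 'a set \<Rightarrow> (('a \<Rightarrow> complex) \<Rightarrow> ('a \<Rightarrow> complex)) \<Rightarrow> real" where
  "opnorm_dual_dual S T F =
     Sup (insert 0 {dual_norm T (F f) / dual_norm S f | f. f \<in> dual_space S \<and> dual_norm S f \<noteq> 0})"

definition opnorm_sp_sp :: "'a::complex_inner set \<Rightarrow> ('a \<Rightarrow> 'a) \<Rightarrow> real" where
  "opnorm_sp_sp S F = Sup (insert 0 {norm (F u) / norm u | u. u \<in> S \<and> u \<noteq> 0})"

definition opnorm_sp_dual :: "'a::complex_inner set \<Rightarrow> 'a set \<Rightarrow> ('a \<Rightarrow> ('a \<Rightarrow> complex)) \<Rightarrow> real" where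
  "opnorm_sp_dual S T F = Sup (insert 0 {dual_norm T (F u) / norm u | u. u \<in> S \<and> u \<noteq> 0})"

end

theory Submission
  imports Defs
begin

text \<open>
  The whole argument rests on one elementary observation:
  for \<open>u \<in> V\<^sub>0\<close> and \<open>v \<in> V\<^sub>1\<close>, the functional \<open>a(u,\<cdot>)\<close> restricted to the orthogonal pair
  \<open>span{v} \<oplus> V\<^sub>0\<close> has squared norm equal to the sum of the squared norms of its two parts,
  hence \<open>|a(u,v)|\<^sup>2/\<parallel>v\<parallel>\<^sup>2 + \<alpha>\<^sup>2\<parallel>u\<parallel>\<^sup>2 \<le> \<parallel>a\<parallel>\<^sup>2\<parallel>u\<parallel>\<^sup>2\<close>, i.e.
  \<open>|a(u,v)| \<le> sqrt(\<parallel>a\<parallel>\<^sup>2 - \<alpha>\<^sup>2) \<parallel>u\<parallel> \<parallel>v\<parallel>\<close>; the same holds with the roles of the arguments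
  exchanged (apply it to the adjoint form).  All three estimates follow from this
  off-diagonal bound together with \<open>\<alpha>\<parallel>A\<^sub>0\<^sub>0\<^sup>-\<^sup>1f\<parallel> \<le> \<parallel>f\<parallel>\<close> and Pythagoras in \<open>V = V\<^sub>0 \<oplus> V\<^sub>1\<close>.
\<close>

lemma scaleC_zero_left: "scaleC 0 (x::'a::complex_inner) = 0"
  using scaleR_scaleC[of 0 x] by simp

lemma scaleC_minus_one: "scaleC (-1) (x::'a::complex_inner) = - x"
  using scaleC_add_left[of 1 "-1" x] by (simp add: scaleC_zero_left scaleC_one add_eq_0_iff)

lemma mult_cnj_self: "z * cnj z = (complex_of_real (cmod z))\<^sup>2"
  using complex_norm_square[of z] by simp

lemma cnj_mult_self: "cnj z * z = (complex_of_real (cmod z))\<^sup>2"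
  using complex_norm_square[of z] by (simp add: mult.commute)

lemma cinner_add_right: "cinner (x::'a::complex_inner) (y + z) = cinner x y + cinner x z"
  by (metis cinner_add_left cinner_commute complex_cnj_add)

lemma cinner_scaleC_right: "cinner (x::'a::complex_inner) (scaleC c y) = cnj c * cinner x y"
  by (metis cinner_scaleC_left cinner_commute complex_cnj_mult)

lemma cinner_zero_left: "cinner (0::'a::complex_inner) y = 0"
  using cinner_add_left[of "0::'a" 0 y] by simp

lemma cinner_zero_right: "cinner (x::'a::complex_inner) 0 = 0"
  using cinner_add_right[of x 0 0] by simp

lemma cinner_minus_left: "cinner (- x::'a::complex_inner) y = - cinner x y"
  using cinner_add_left[of x "- x" y] by (simp add: cinner_zero_left add_eq_0_iff)

lemma cinner_minus_right: "cinner (x::'a::complex_inner) (- y) = - cinner x y"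
  using cinner_add_right[of x y "- y"] by (simp add: cinner_zero_right add_eq_0_iff)

lemma cinner_diff_left: "cinner (x - z::'a::complex_inner) y = cinner x y - cinner z y"
  using cinner_add_left[of x "- z" y] by (simp add: cinner_minus_left)

lemma cinner_diff_right: "cinner (x::'a::complex_inner) (y - z) = cinner x y - cinner x z"
  using cinner_add_right[of x y "- z"] by (simp add: cinner_minus_right)

lemma cinner_self: "cinner (x::'a::complex_inner) x = complex_of_real ((norm x)\<^sup>2)"
  by (simp add: complex_eq_iff cinner_self_real norm_eq_sqrt_cinner cinner_self_nonneg)

lemma cinner_self_Re: "Re (cinner (x::'a::complex_inner) x) = (norm x)\<^sup>2"
  by (simp add: cinner_self)

lemma norm_scaleC: "norm (scaleC c (x::'a::complex_inner)) = cmod c * norm x"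
proof -
  have "cinner (scaleC c x) (scaleC c x) = c * cnj c * cinner x x"
    by (simp add: cinner_scaleC_left cinner_scaleC_right mult_ac)
  then have "(norm (scaleC c x))\<^sup>2 = Re (c * cnj c * cinner x x)"
    by (simp only: cinner_self_Re[symmetric])
  also have "\<dots> = (cmod c * norm x)\<^sup>2"
    by (simp add: cinner_self mult_cnj_self power_mult_distrib)
  finally show ?thesis by simp
qed

lemma norm_add_square:
  "(norm (x + y::'a::complex_inner))\<^sup>2 = (norm x)\<^sup>2 + (norm y)\<^sup>2 + 2 * Re (cinner x y)"
proof -
  have "(norm (x + y))\<^sup>2 = Re (cinner x x + cinner x y + cinner y x + cinner y y)"
    by (simp add: cinner_self_Re[symmetric] cinner_add_left cinner_add_right)
  also have "\<dots> = (norm x)\<^sup>2 + (norm y)\<^sup>2 + 2 * Re (cinner x y)"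
    by (subst cinner_commute[of y x]) (simp add: cinner_self_Re)
  finally show ?thesis .
qed

lemma pythagoras:
  "cinner x y = 0 \<Longrightarrow> (norm (x + y::'a::complex_inner))\<^sup>2 = (norm x)\<^sup>2 + (norm y)\<^sup>2"
  by (simp add: norm_add_square)

lemma parallelogram:
  "(norm (x - y::'a::complex_inner))\<^sup>2 + (norm (x + y))\<^sup>2 = 2 * (norm x)\<^sup>2 + 2 * (norm y)\<^sup>2"
  using norm_add_square[of x y] norm_add_square[of x "- y"] by (simp add: cinner_minus_right)

text \<open>Cauchy--Schwarz, proved by expanding \<open>\<parallel>x - c y\<parallel>\<^sup>2 \<ge> 0\<close> for the optimal \<open>c\<close>.\<close>
lemma cauchy_schwarz: "cmod (cinner (x::'a::complex_inner) y) \<le> norm x * norm y"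
proof (cases "y = 0")
  case True
  then show ?thesis by (simp add: cinner_zero_right)
next
  case False
  define N where "N = (norm y)\<^sup>2"
  have N: "N > 0" using False by (simp add: N_def)
  define c where "c = cinner x y / complex_of_real N"
  define q where "q = complex_of_real ((cmod (cinner x y))\<^sup>2 / N)"
  have "cinner (x - scaleC c y) (x - scaleC c y)
     = cinner x x - cnj c * cinner x y - c * cinner y x + c * cnj c * cinner y y"
    by (simp add: cinner_diff_left cinner_diff_right cinner_scaleC_left cinner_scaleC_right
        algebra_simps)
  also have "c * cinner y x = q"
    by (subst cinner_commute) (simp add: c_def q_def mult_cnj_self cnj_mult_self)
  also have "cnj c * cinner x y = q"
    by (simp add: c_def q_def mult_cnj_self cnj_mult_self mult.commute)
  also have "c * cnj c * cinner y y = q"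
  proof -
    have "complex_of_real (norm y) * complex_of_real (norm y) = complex_of_real N"
      by (simp add: N_def power2_eq_square)
    then show ?thesis
      using N by (simp add: c_def q_def cinner_self mult_cnj_self cnj_mult_self power2_eq_square)
  qed
  finally have "0 \<le> (norm x)\<^sup>2 - (cmod (cinner x y))\<^sup>2 / N"
    using cinner_self_nonneg[of "x - scaleC c y"]
    by (simp add: q_def cinner_self del: of_real_power)
  then have "(cmod (cinner x y))\<^sup>2 \<le> (norm x * norm y)\<^sup>2"
    using N by (simp add: field_simps N_def)
  then show ?thesis by (simp add: power2_le_iff_abs_le)
qed

section \<open>Closed subspaces and orthogonal projection\<close>

definition csubspace :: "'a::complex_inner set \<Rightarrow> bool" where
  "csubspace M \<longleftrightarrow> 0 \<in> M \<and> (\<forall>x\<in>M. \<forall>y\<in>M. x + y \<in> M) \<and> (\<forall>x\<in>M. \<forall>c. scaleC c x \<in> M)"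

text \<open>Closedness, phrased sequentially since that is how it is used.\<close>
definition seqclosed :: "'a::complex_inner set \<Rightarrow> bool" where
  "seqclosed M \<longleftrightarrow> (\<forall>X l. (\<forall>n. X n \<in> M) \<longrightarrow> X \<longlonglongrightarrow> l \<longrightarrow> l \<in> M)"

lemma csubspace_zero: "csubspace M \<Longrightarrow> 0 \<in> M"
  by (simp add: csubspace_def)

lemma csubspace_add: "csubspace M \<Longrightarrow> x \<in> M \<Longrightarrow> y \<in> M \<Longrightarrow> x + y \<in> M"
  by (simp add: csubspace_def)

lemma csubspace_scaleC: "csubspace M \<Longrightarrow> x \<in> M \<Longrightarrow> scaleC c x \<in> M"
  by (simp add: csubspace_def)

lemma csubspace_scaleR: "csubspace M \<Longrightarrow> x \<in> M \<Longrightarrow> scaleR r x \<in> M"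
  by (simp add: csubspace_scaleC scaleR_scaleC)

lemma csubspace_diff: "csubspace M \<Longrightarrow> x \<in> M \<Longrightarrow> y \<in> M \<Longrightarrow> x - y \<in> M"
  by (metis csubspace_add csubspace_scaleC scaleC_minus_one diff_conv_add_uminus)

text \<open>This is the form in which continuity of bounded (sesqui)linear maps is used.\<close>
lemma tendsto_by_lipschitz:
  fixes X :: "nat \<Rightarrow> 'a::real_normed_vector" and g :: "nat \<Rightarrow> 'b::real_normed_vector"
  assumes "X \<longlonglongrightarrow> l" and "\<And>n. norm (g n - c) \<le> K * norm (X n - l)"
  shows "g \<longlonglongrightarrow> c"
proof -
  have "(\<lambda>n. K * norm (X n - l)) \<longlonglongrightarrow> 0"
    using tendsto_mult_right_zero[OF tendsto_norm_zero[OF LIM_zero[OF assms(1)]]] .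
  then have "(\<lambda>n. g n - c) \<longlonglongrightarrow> 0"
    by (rule Lim_null_comparison[rotated]) (use assms(2) in auto)
  then show ?thesis by (simp add: LIM_zero_iff)
qed

text \<open>A minimizing sequence for the distance from \<open>y\<close> to a subspace is Cauchy
  (parallelogram law: the midpoint of two members is again in the subspace).\<close>
lemma minimizing_sequence_Cauchy:
  fixes M :: "'a::complex_inner set"
  assumes M: "csubspace M" and X: "\<And>n. X n \<in> M"
    and lower: "\<And>m. m \<in> M \<Longrightarrow> d \<le> (norm (y - m))\<^sup>2"
    and almost: "\<And>n. (norm (y - X n))\<^sup>2 < d + 1 / real (Suc n)"
  shows "Cauchy X"
proof -
  have close: "(norm (X k - X n))\<^sup>2 \<le> 2 / real (Suc n) + 2 / real (Suc k)" for n k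
  proof -
    have mid: "(1/2) *\<^sub>R (X n + X k) \<in> M"
      by (intro csubspace_scaleR[OF M] csubspace_add[OF M] X)
    have "(y - X n) + (y - X k) = 2 *\<^sub>R (y - (1/2) *\<^sub>R (X n + X k))"
      by (simp add: algebra_simps scaleR_2)
    then have "(norm ((y - X n) + (y - X k)))\<^sup>2 = 4 * (norm (y - (1/2) *\<^sub>R (X n + X k)))\<^sup>2"
      by (simp add: power_mult_distrib)
    also have "\<dots> \<ge> 4 * d" using lower[OF mid] by simp
    finally show ?thesis
      using parallelogram[of "y - X n" "y - X k"] almost[of n] almost[of k] by simp
  qed
  show ?thesis unfolding Cauchy_iff
  proof (intro allI impI)
    fix e :: real assume e: "e > 0"
    obtain N :: nat where N: "4 / e\<^sup>2 < real N" using reals_Archimedean2 by blast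
    have "norm (X m - X n) < e" if "m \<ge> N" "n \<ge> N" for m n
    proof -
      have "2 / real (Suc n) \<le> 2 / real (Suc N)" "2 / real (Suc m) \<le> 2 / real (Suc N)"
        using that by (auto intro!: divide_left_mono)
      moreover have "4 / real (Suc N) < e\<^sup>2"
      proof -
        have "4 / e\<^sup>2 < real (Suc N)" using N by simp
        then show ?thesis using e by (simp add: field_simps)
      qed
      ultimately have "(norm (X m - X n))\<^sup>2 < e\<^sup>2" using close[of m n] by linarith
      then show ?thesis using e by (simp add: power_less_imp_less_base)
    qed
    then show "\<exists>M. \<forall>m\<ge>M. \<forall>n\<ge>M. norm (X m - X n) < e" by blast
  qed
qed

lemma nearest_point_exists:
  fixes M :: "'a::chilbert_space set"
  assumes M: "csubspace M" and closed: "seqclosed M"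
  shows "\<exists>m\<in>M. \<forall>m'\<in>M. norm (y - m) \<le> norm (y - m')"
proof -
  define D where "D = {(norm (y - m))\<^sup>2 | m. m \<in> M}"
  have D_nonempty: "D \<noteq> {}" using csubspace_zero[OF M] by (auto simp: D_def)
  have lower: "Inf D \<le> (norm (y - m))\<^sup>2" if "m \<in> M" for m
    by (rule cInf_lower) (use that in \<open>auto simp: D_def intro!: bdd_belowI[of _ 0]\<close>)
  have "\<exists>m. m \<in> M \<and> (norm (y - m))\<^sup>2 < Inf D + 1 / real (Suc n)" for n
    using cInf_lessD[OF D_nonempty, of "Inf D + 1 / real (Suc n)"] by (auto simp: D_def)
  then obtain X where X: "\<And>n. X n \<in> M"
    and almost: "\<And>n. (norm (y - X n))\<^sup>2 < Inf D + 1 / real (Suc n)"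
    by metis
  have "Cauchy X" by (rule minimizing_sequence_Cauchy[OF M X lower almost])
  then obtain m where lim: "X \<longlonglongrightarrow> m" using Cauchy_convergent convergent_def by blast
  have "m \<in> M" using closed X lim unfolding seqclosed_def by blast
  moreover have "(norm (y - m))\<^sup>2 \<le> Inf D"
  proof (rule LIMSEQ_le)
    show "(\<lambda>n. (norm (y - X n))\<^sup>2) \<longlonglongrightarrow> (norm (y - m))\<^sup>2"
      by (intro tendsto_intros lim)
    show "(\<lambda>n. Inf D + 1 / real (Suc n)) \<longlonglongrightarrow> Inf D"
      using LIMSEQ_inverse_real_of_nat_add[of "Inf D"] by (simp add: inverse_eq_divide)
    show "\<exists>N. \<forall>n\<ge>N. (norm (y - X n))\<^sup>2 \<le> Inf D + 1 / real (Suc n)"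
      using almost less_imp_le by blast
  qed
  ultimately show ?thesis
    using lower by (metis norm_ge_zero order_trans power2_le_imp_le)
qed

text \<open>The error of a best approximation is orthogonal to the subspace: otherwise moving
  slightly in the direction of the non-orthogonal vector would decrease the distance.\<close>
lemma nearest_point_orthogonal:
  fixes M :: "'a::complex_inner set"
  assumes M: "csubspace M" and m: "m \<in> M"
    and nearest: "\<And>m'. m' \<in> M \<Longrightarrow> norm (y - m) \<le> norm (y - m')"
    and x: "x \<in> M"
  shows "cinner (y - m) x = 0"
proof -
  define r where "r = y - m"
  define \<rho> where "\<rho> = cinner r x"
  define t :: real where "t = 1 / ((norm x)\<^sup>2 + 1)"
  have t: "t > 0" by (simp add: t_def add_nonneg_pos)
  define c where "c = complex_of_real t * \<rho>"
  have "m + scaleC c x \<in> M" by (intro csubspace_add[OF M] m csubspace_scaleC[OF M] x)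
  from nearest[OF this] have "(norm r)\<^sup>2 \<le> (norm (r + - scaleC c x))\<^sup>2"
    by (simp add: r_def algebra_simps)
  also have "\<dots> = (norm r)\<^sup>2 + (cmod c * norm x)\<^sup>2 - 2 * Re (cnj c * \<rho>)"
    using norm_add_square[of r "- scaleC c x"]
    by (simp add: norm_scaleC cinner_minus_right cinner_scaleC_right \<rho>_def)
  also have "cnj c * \<rho> = complex_of_real (t * (cmod \<rho>)\<^sup>2)"
    by (simp add: c_def cnj_mult_self)
  also have "cmod c = t * cmod \<rho>" using t by (simp add: c_def norm_mult)
  finally have "2 * t * (cmod \<rho>)\<^sup>2 \<le> t\<^sup>2 * (cmod \<rho>)\<^sup>2 * (norm x)\<^sup>2"
    by (simp add: algebra_simps)
  then have "2 * (cmod \<rho>)\<^sup>2 \<le> (cmod \<rho>)\<^sup>2 * (t * (norm x)\<^sup>2)"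
    using t by (simp add: power2_eq_square mult_ac mult_le_cancel_left_pos)
  also have "\<dots> \<le> (cmod \<rho>)\<^sup>2 * 1"
    by (intro mult_left_mono) (simp_all add: t_def add_nonneg_pos)
  finally have "(cmod \<rho>)\<^sup>2 \<le> 0" by simp
  then show ?thesis by (simp add: \<rho>_def r_def)
qed

lemma projection:
  fixes M :: "'a::chilbert_space set"
  assumes "csubspace M" and "seqclosed M"
  shows "\<exists>m\<in>M. \<forall>x\<in>M. cinner (y - m) x = 0"
  using nearest_point_exists[OF assms, of y] nearest_point_orthogonal[OF assms(1)] by blast

section \<open>The Riesz representation theorem on a closed subspace\<close>

lemma antilinear_on_add: "antilinear_on M f \<Longrightarrow> x \<in> M \<Longrightarrow> y \<in> M \<Longrightarrow> f (x + y) = f x + f y"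
  by (simp add: antilinear_on_def)

lemma antilinear_on_scaleC: "antilinear_on M f \<Longrightarrow> x \<in> M \<Longrightarrow> f (scaleC c x) = cnj c * f x"
  by (simp add: antilinear_on_def)

lemma antilinear_on_zero: "antilinear_on M f \<Longrightarrow> 0 \<in> M \<Longrightarrow> f 0 = 0"
  using antilinear_on_add[of M f 0 0] by simp

lemma antilinear_on_diff:
  "antilinear_on M f \<Longrightarrow> csubspace M \<Longrightarrow> x \<in> M \<Longrightarrow> y \<in> M \<Longrightarrow> f (x - y) = f x - f y"
  using antilinear_on_add[of M f "x - y" y] csubspace_diff[of M x y] by simp

lemma null_space_closed_subspace:
  fixes M :: "'a::complex_inner set"
  assumes M: "csubspace M" and closed: "seqclosed M"
    and anti: "antilinear_on M f" and bounded: "bounded_on M f"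
  shows "csubspace {v\<in>M. f v = 0}" and "seqclosed {v\<in>M. f v = 0}"
proof -
  show "csubspace {v\<in>M. f v = 0}"
    using M antilinear_on_zero[OF anti csubspace_zero[OF M]] unfolding csubspace_def
    by (auto simp: antilinear_on_add[OF anti] antilinear_on_scaleC[OF anti])
  obtain K where K: "\<And>x. x \<in> M \<Longrightarrow> cmod (f x) \<le> K * norm x"
    using bounded unfolding bounded_on_def by blast
  show "seqclosed {v\<in>M. f v = 0}" unfolding seqclosed_def
  proof (intro allI impI)
    fix X l assume X: "\<forall>n. X n \<in> {v\<in>M. f v = 0}" and lim: "X \<longlonglongrightarrow> l"
    have l: "l \<in> M" using closed X lim unfolding seqclosed_def by blast
    have "(\<lambda>n. f (X n)) \<longlonglongrightarrow> f l"
    proof (rule tendsto_by_lipschitz[OF lim])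
      fix n
      show "norm (f (X n) - f l) \<le> K * norm (X n - l)"
        using K[OF csubspace_diff[OF M _ l], of "X n"] X antilinear_on_diff[OF anti M _ l, of "X n"]
        by simp
    qed
    then have "f l = 0" using X by (simp add: LIMSEQ_const_iff)
    then show "l \<in> {v\<in>M. f v = 0}" using l by simp
  qed
qed

text \<open>Riesz: a bounded antilinear functional on a closed subspace \<open>M\<close> is \<open>cinner r\<close> for some
  \<open>r \<in> M\<close>; \<open>r\<close> is a multiple of the component of any \<open>y\<close> with \<open>f y \<noteq> 0\<close> orthogonal to the
  null space.\<close>
lemma riesz:
  fixes M :: "'a::chilbert_space set"
  assumes M: "csubspace M" and closed: "seqclosed M"
    and anti: "antilinear_on M f" and bounded: "bounded_on M f"
  shows "\<exists>r\<in>M. \<forall>v\<in>M. f v = cinner r v"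
proof (cases "\<forall>v\<in>M. f v = 0")
  case True
  then show ?thesis using csubspace_zero[OF M] cinner_zero_left by metis
next
  case False
  then obtain y where y: "y \<in> M" and fy: "f y \<noteq> 0" by blast
  define N where "N = {v\<in>M. f v = 0}"
  have "csubspace N" "seqclosed N"
    unfolding N_def by (rule null_space_closed_subspace[OF M closed anti bounded])+
  then obtain p where p: "p \<in> N" and orth: "\<And>x. x \<in> N \<Longrightarrow> cinner (y - p) x = 0"
    using projection[of N y] by blast
  define z where "z = y - p"
  have z: "z \<in> M" using y p csubspace_diff[OF M] by (auto simp: z_def N_def)
  have fz: "f z = f y"
    using antilinear_on_diff[OF anti M y, of p] p by (auto simp: z_def N_def)
  then have "z \<noteq> 0" using fy antilinear_on_zero[OF anti csubspace_zero[OF M]] by auto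
  then have nz: "cinner z z \<noteq> 0" using cinner_self_eq_zero by blast
  define r where "r = scaleC (f z / cinner z z) z"
  have "f v = cinner r v" if v: "v \<in> M" for v
  proof -
    define x where "x = scaleC (cnj (f z)) v - scaleC (cnj (f v)) z"
    have x: "x \<in> M" unfolding x_def by (intro csubspace_diff[OF M] csubspace_scaleC[OF M] v z)
    have "f x = f z * f v - f v * f z"
      unfolding x_def
      using antilinear_on_diff[OF anti M csubspace_scaleC[OF M v] csubspace_scaleC[OF M z]]
        antilinear_on_scaleC[OF anti v] antilinear_on_scaleC[OF anti z]
      by simp
    then have "x \<in> N" using x by (simp add: N_def)
    then have "cinner z x = 0" using orth by (simp add: z_def)
    then have "f z * cinner z v - f v * cinner z z = 0"
      by (simp add: x_def cinner_diff_right cinner_scaleC_right)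
    then have "f v = f z * cinner z v / cinner z z" using nz by (simp add: field_simps)
    then show ?thesis by (simp add: r_def cinner_scaleC_left)
  qed
  moreover have "r \<in> M" unfolding r_def by (rule csubspace_scaleC[OF M z])
  ultimately show ?thesis by blast
qed

lemma
  assumes "bounded_op_to_dual a"
  shows bounded_op_add_left: "a (u + u') v = a u v + a u' v"
    and bounded_op_scaleC_left: "a (scaleC c u) v = c * a u v"
    and bounded_op_diff_left: "a (u - u') v = a u v - a u' v"
    and bounded_op_zero_left: "a 0 v = 0"
    and bounded_op_add_right: "a u (v + v') = a u v + a u v'"
    and bounded_op_scaleC_right: "a u (scaleC c v) = cnj c * a u v"
    and bounded_op_zero_right: "a u 0 = 0"
    and bounded_op_antilinear: "antilinear_on M (a u)"
proof -
  have add: "\<And>u u' v. a (u + u') v = a u v + a u' v"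
    and sc: "\<And>c u v. a (scaleC c u) v = c * a u v"
    using assms by (auto simp: bounded_op_to_dual_def)
  then show "a (u + u') v = a u v + a u' v" and "a (scaleC c u) v = c * a u v" .
  show "a u (v + v') = a u v + a u v'" and "a u (scaleC c v) = cnj c * a u v"
    and "antilinear_on M (a u)"
    using assms by (auto simp: bounded_op_to_dual_def antilinear_on_def)
  show "a (u - u') v = a u v - a u' v"
    using add[of u "scaleC (-1) u'"] sc[of "-1" u'] by (simp add: scaleC_minus_one)
  show "a 0 v = 0" using sc[of 0 0] by (simp add: scaleC_zero_left)
  show "a u 0 = 0"
    using assms antilinear_on_zero[of UNIV "a u"] by (simp add: bounded_op_to_dual_def)
qed

lemma bounded_op_bound:
  assumes "bounded_op_to_dual a"
  obtains K where "\<And>u v. cmod (a u v) \<le> K * norm u * norm v"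
  using assms unfolding bounded_op_to_dual_def by blast

lemma ker_op_closed_subspace:
  fixes B :: "'a::complex_inner \<Rightarrow> 'b::complex_inner \<Rightarrow> complex"
  assumes B: "bounded_op_to_dual B"
  shows "csubspace (ker_op B)" and "seqclosed (ker_op B)"
proof -
  show "csubspace (ker_op B)"
    by (simp add: csubspace_def ker_op_def bounded_op_zero_left[OF B] bounded_op_add_left[OF B]
        bounded_op_scaleC_left[OF B])
  obtain K where K: "\<And>u q. cmod (B u q) \<le> K * norm u * norm q"
    using bounded_op_bound[OF B] by blast
  show "seqclosed (ker_op B)" unfolding seqclosed_def
  proof (intro allI impI)
    fix X l assume X: "\<forall>n. X n \<in> ker_op B" and lim: "X \<longlonglongrightarrow> l"
    have "B l q = 0" for q
    proof (rule LIMSEQ_unique)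
      show "(\<lambda>n. B (X n) q) \<longlonglongrightarrow> B l q"
        by (rule tendsto_by_lipschitz[OF lim, where K = "K * norm q"])
          (use K[of "X _ - l" q] in \<open>simp add: bounded_op_diff_left[OF B, symmetric] mult_ac\<close>)
      show "(\<lambda>n. B (X n) q) \<longlonglongrightarrow> 0" using X by (simp add: ker_op_def)
    qed
    then show "l \<in> ker_op B" by (simp add: ker_op_def)
  qed
qed

text \<open>The adjoint form \<open>a\<^sup>*(u,v) = conj (a(v,u))\<close> is again a bounded sesquilinear form;
  it allows statements about the second argument of a to be derived from statements
  about the first.\<close>
definition adjoint_form :: "('a \<Rightarrow> 'a \<Rightarrow> complex) \<Rightarrow> 'a \<Rightarrow> 'a \<Rightarrow> complex" where
  "adjoint_form a u v = cnj (a v u)"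

lemma adjoint_form_bounded_op:
  fixes a :: "'a::complex_inner \<Rightarrow> 'a \<Rightarrow> complex"
  assumes a: "bounded_op_to_dual a"
  shows "bounded_op_to_dual (adjoint_form a)"
proof -
  obtain K where K: "\<And>u v. cmod (a u v) \<le> K * norm u * norm v"
    using bounded_op_bound[OF a] by blast
  have "cmod (adjoint_form a u v) \<le> K * norm u * norm v" for u v
    using K[of v u] by (simp add: adjoint_form_def mult_ac)
  then show ?thesis
    by (auto simp: bounded_op_to_dual_def adjoint_form_def antilinear_on_def
        bounded_op_add_left[OF a] bounded_op_scaleC_left[OF a]
        bounded_op_add_right[OF a] bounded_op_scaleC_right[OF a])
qed

text \<open>The inf-sup condition in the form in which it is used: every \<open>u \<in> K\<close> satisfies
  \<open>\<alpha> \<parallel>u\<parallel> \<le> sup\<^sub>v\<^sub>\<in>\<^sub>K |a(u,v)|/\<parallel>v\<parallel>\<close>, expressed through the upper bounds of that supremum.\<close>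
definition inf_sup_bound :: "('a::complex_inner \<Rightarrow> 'a \<Rightarrow> complex) \<Rightarrow> 'a set \<Rightarrow> real \<Rightarrow> bool" where
  "inf_sup_bound a K \<alpha> \<longleftrightarrow>
     (\<forall>u\<in>K. \<forall>C\<ge>0. (\<forall>v\<in>K. cmod (a u v) \<le> C * norm v) \<longrightarrow> \<alpha> * norm u \<le> C)"

lemma inf_sup_boundD:
  "inf_sup_bound a K \<alpha> \<Longrightarrow> u \<in> K \<Longrightarrow> 0 \<le> C \<Longrightarrow> (\<And>v. v \<in> K \<Longrightarrow> cmod (a u v) \<le> C * norm v)
    \<Longrightarrow> \<alpha> * norm u \<le> C"
  unfolding inf_sup_bound_def by blast

lemma inf_sup_bound_injective:
  assumes "inf_sup_bound a K \<alpha>" "0 < \<alpha>" "u \<in> K" "\<And>v. v \<in> K \<Longrightarrow> a u v = 0"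
  shows "u = 0"
  using inf_sup_boundD[OF assms(1,3), of 0] assms(2,4) by (simp add: mult_le_0_iff)

section \<open>Solvability of variational problems under the inf-sup condition\<close>

definition representable :: "('a::complex_inner \<Rightarrow> 'a \<Rightarrow> complex) \<Rightarrow> 'a set \<Rightarrow> 'a set" where
  "representable a M = {r\<in>M. \<exists>u\<in>M. \<forall>v\<in>M. a u v = cinner r v}"

lemma representable_subspace:
  fixes a :: "'a::complex_inner \<Rightarrow> 'a \<Rightarrow> complex"
  assumes a: "bounded_op_to_dual a" and M: "csubspace M"
  shows "csubspace (representable a M)"
  unfolding csubspace_def
proof (intro conjI ballI allI)
  show "0 \<in> representable a M" using csubspace_zero[OF M]
    by (auto simp: representable_def bounded_op_zero_left[OF a] cinner_zero_left
        intro!: bexI[of _ 0])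
  fix x y c assume x: "x \<in> representable a M" and y: "y \<in> representable a M"
  from x obtain u where u: "x \<in> M" "u \<in> M" "\<forall>v\<in>M. a u v = cinner x v"
    by (auto simp: representable_def)
  moreover from y obtain u' where "y \<in> M" "u' \<in> M" "\<forall>v\<in>M. a u' v = cinner y v"
    by (auto simp: representable_def)
  ultimately show "x + y \<in> representable a M" unfolding representable_def
    by (auto simp: bounded_op_add_left[OF a] cinner_add_left csubspace_add[OF M]
        intro!: bexI[of _ "u + u'"])
  from u show "scaleC c x \<in> representable a M" unfolding representable_def
    by (auto simp: bounded_op_scaleC_left[OF a] cinner_scaleC_left csubspace_scaleC[OF M]
        intro!: bexI[of _ "scaleC c u"])
qed

text \<open>The representable vectors form a closed set: the inf-sup condition turns a convergent
  sequence of representable \<open>r\<close> into a Cauchy sequence of preimages \<open>u\<close>.\<close>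
lemma representable_closed:
  fixes a :: "'a::chilbert_space \<Rightarrow> 'a \<Rightarrow> complex"
  assumes a: "bounded_op_to_dual a" and M: "csubspace M" and closed: "seqclosed M"
    and inf_sup: "inf_sup_bound a M \<alpha>" and alpha: "0 < \<alpha>"
  shows "seqclosed (representable a M)"
proof -
  obtain K where K: "\<And>u v. cmod (a u v) \<le> K * norm u * norm v"
    using bounded_op_bound[OF a] by blast
  show ?thesis unfolding seqclosed_def
  proof (intro allI impI)
    fix X l assume X: "\<forall>n. X n \<in> representable a M" and lim: "X \<longlonglongrightarrow> l"
    have l: "l \<in> M" using closed X lim unfolding seqclosed_def representable_def by blast
    have "\<forall>n. \<exists>u. u \<in> M \<and> (\<forall>v\<in>M. a u v = cinner (X n) v)" using X by (auto simp: representable_def)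
    then obtain U where U_M: "\<And>n. U n \<in> M" and U: "\<And>n v. v \<in> M \<Longrightarrow> a (U n) v = cinner (X n) v"
      by metis
    have U_close: "\<alpha> * norm (U n - U m) \<le> norm (X n - X m)" for n m
      by (rule inf_sup_boundD[OF inf_sup csubspace_diff[OF M U_M U_M]])
        (simp_all add: bounded_op_diff_left[OF a] U cinner_diff_left[symmetric] cauchy_schwarz)
    have "Cauchy U" unfolding Cauchy_iff
    proof (intro allI impI)
      fix e :: real assume e: "e > 0"
      obtain N where N: "\<And>m n. m \<ge> N \<Longrightarrow> n \<ge> N \<Longrightarrow> norm (X m - X n) < \<alpha> * e"
        using LIMSEQ_imp_Cauchy[OF lim] alpha e unfolding Cauchy_iff by (meson mult_pos_pos)
      have "norm (U m - U n) < e" if "m \<ge> N" "n \<ge> N" for m n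
        using U_close[of m n] N[OF that] alpha by (smt (verit) mult_less_cancel_left_pos)
      then show "\<exists>M. \<forall>m\<ge>M. \<forall>n\<ge>M. norm (U m - U n) < e" by blast
    qed
    then obtain u where u_lim: "U \<longlonglongrightarrow> u" using Cauchy_convergent convergent_def by blast
    have u: "u \<in> M" using closed U_M u_lim unfolding seqclosed_def by blast
    have "a u v = cinner l v" if v: "v \<in> M" for v
    proof (rule LIMSEQ_unique)
      show "(\<lambda>n. a (U n) v) \<longlonglongrightarrow> a u v"
        by (rule tendsto_by_lipschitz[OF u_lim, where K = "K * norm v"])
          (use K[of "U _ - u" v] in \<open>simp add: bounded_op_diff_left[OF a, symmetric] mult_ac\<close>)
      show "(\<lambda>n. a (U n) v) \<longlonglongrightarrow> cinner l v"
        unfolding U[OF v]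
        by (rule tendsto_by_lipschitz[OF lim, where K = "norm v"])
          (use cauchy_schwarz[of "X _ - l" v] in \<open>simp add: cinner_diff_left[symmetric] mult_ac\<close>)
    qed
    then show "l \<in> representable a M" using l u by (auto simp: representable_def)
  qed
qed

text \<open>By Riesz it suffices that the representable subspace \<open>R\<close> is all of \<open>M\<close>; a vector of \<open>M\<close>
  orthogonal to \<open>R\<close> is annihilated by every \<open>a(u,\<cdot>)\<close>, hence zero by the adjoint condition.\<close>
lemma inf_sup_solvable:
  fixes a :: "'a::chilbert_space \<Rightarrow> 'a \<Rightarrow> complex"
  assumes a: "bounded_op_to_dual a" and M: "csubspace M" and closed: "seqclosed M"
    and left: "inf_sup_bound a M \<alpha>" and right: "inf_sup_bound (adjoint_form a) M \<alpha>"
    and alpha: "0 < \<alpha>"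
    and anti: "antilinear_on M f" and bounded: "bounded_on M f"
  shows "\<exists>u\<in>M. \<forall>v\<in>M. a u v = f v"
proof -
  obtain K where K: "\<And>u v. cmod (a u v) \<le> K * norm u * norm v"
    using bounded_op_bound[OF a] by blast
  define R where "R = representable a M"
  have R: "csubspace R" "seqclosed R"
    unfolding R_def
    by (rule representable_subspace[OF a M] representable_closed[OF a M closed left alpha])+
  have "y \<in> R" if y: "y \<in> M" for y
  proof -
    obtain p where p: "p \<in> R" and orth: "\<And>x. x \<in> R \<Longrightarrow> cinner (y - p) x = 0"
      using projection[OF R, of y] by blast
    have "y - p \<in> M" using y p csubspace_diff[OF M] by (auto simp: R_def representable_def)
    moreover have "adjoint_form a (y - p) u = 0" if u: "u \<in> M" for u
    proof -
      have "bounded_on M (a u)" unfolding bounded_on_def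
        using K[of u] by (intro exI[of _ "K * norm u"]) auto
      then obtain r where r: "r \<in> M" "\<forall>v\<in>M. a u v = cinner r v"
        using riesz[OF M closed bounded_op_antilinear[OF a]] by blast
      then have "r \<in> R" using u by (auto simp: R_def representable_def)
      then have "cinner (y - p) r = 0" by (rule orth)
      then show ?thesis
        using r \<open>y - p \<in> M\<close> by (simp add: adjoint_form_def) (metis cinner_commute complex_cnj_zero)
    qed
    ultimately have "y - p = 0" by (rule inf_sup_bound_injective[OF right alpha])
    then show ?thesis using p by simp
  qed
  moreover obtain r where r: "r \<in> M" "\<forall>v\<in>M. f v = cinner r v"
    using riesz[OF M closed anti bounded] by blast
  ultimately obtain u where "u \<in> M" "\<forall>v\<in>M. a u v = cinner r v"
    unfolding R_def representable_def by blast
  then show ?thesis using r by auto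
qed

text \<open>All norms of the statement are suprema \<open>Sup (insert 0 {g x / h x | x. P x})\<close>;
  such a supremum is bounded by any nonnegative \<open>C\<close> with \<open>g \<le> C h\<close>.\<close>
lemma Sup_quotients_le:
  fixes g h :: "'b \<Rightarrow> real"
  assumes "0 \<le> C" and "\<And>x. P x \<Longrightarrow> g x \<le> C * h x" and "\<And>x. P x \<Longrightarrow> 0 < h x"
  shows "Sup (insert 0 {g x / h x | x. P x}) \<le> C"
  by (rule cSup_least) (auto simp: assms pos_divide_le_eq)

lemma Sup_quotients_upper:
  fixes g h :: "'b \<Rightarrow> real"
  assumes "bdd_above {g x / h x | x. P x}" and "P x"
  shows "g x / h x \<le> Sup (insert 0 {g x / h x | x. P x})"
  using assms by (intro cSup_upper) auto

lemma Sup_quotients_nonneg: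
  fixes g h :: "'b \<Rightarrow> real"
  assumes "bdd_above {g x / h x | x. P x}"
  shows "0 \<le> Sup (insert 0 {g x / h x | x. P x})"
  using assms by (intro cSup_upper) auto

lemma dual_norm_bdd_above:
  assumes "f \<in> dual_space S"
  shows "bdd_above {cmod (f v) / norm v | v. v \<in> S \<and> v \<noteq> 0}"
proof -
  obtain K where "\<forall>x\<in>S. cmod (f x) \<le> K * norm x"
    using assms unfolding dual_space_def bounded_on_def by blast
  then show ?thesis by (intro bdd_aboveI[of _ K]) (auto simp: pos_divide_le_eq)
qed

lemma dual_norm_nonneg: "f \<in> dual_space S \<Longrightarrow> 0 \<le> dual_norm S f"
  unfolding dual_norm_def by (rule Sup_quotients_nonneg[OF dual_norm_bdd_above])

lemma dual_norm_bound:
  assumes f: "f \<in> dual_space S" and "0 \<in> S" and v: "v \<in> S"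
  shows "cmod (f v) \<le> dual_norm S f * norm v"
proof (cases "v = 0")
  case True
  then show ?thesis using f \<open>0 \<in> S\<close> antilinear_on_zero by (auto simp: dual_space_def)
next
  case False
  have "cmod (f v) / norm v \<le> dual_norm S f"
    unfolding dual_norm_def using v False
    by (intro Sup_quotients_upper[OF dual_norm_bdd_above[OF f]]) auto
  then show ?thesis using False by (simp add: pos_divide_le_eq)
qed

lemma dual_norm_le:
  "0 \<le> C \<Longrightarrow> (\<And>v. v \<in> S \<Longrightarrow> cmod (f v) \<le> C * norm v) \<Longrightarrow> dual_norm S f \<le> C"
  unfolding dual_norm_def by (rule Sup_quotients_le) auto

lemma form_norm_bound:
  assumes a: "bounded_op_to_dual a" and bdd: "bdd_above (form_quotients a)"
  shows "cmod (a u v) \<le> form_norm a * norm u * norm v"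
proof (cases "u = 0 \<or> v = 0")
  case True
  then show ?thesis by (auto simp: bounded_op_zero_left[OF a] bounded_op_zero_right[OF a])
next
  case False
  then have "cmod (a u v) / (norm u * norm v) \<le> form_norm a"
    using bdd unfolding form_norm_def form_quotients_def
    by (intro cSup_upper) auto
  then show ?thesis using False by (simp add: pos_divide_le_eq mult.assoc)
qed

lemma form_norm_nonneg: "bdd_above (form_quotients a) \<Longrightarrow> 0 \<le> form_norm a"
  unfolding form_norm_def by (intro cSup_upper) auto

lemma inf_sup_left_bound:
  fixes a :: "'a::complex_inner \<Rightarrow> 'a \<Rightarrow> complex"
  assumes C: "0 \<le> C" and bound: "\<And>u v. cmod (a u v) \<le> C * norm u * norm v"
  shows "inf_sup_bound a K (inf_sup_left a K)"
  unfolding inf_sup_bound_def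
proof (intro ballI allI impI)
  fix u D assume u: "u \<in> K" and D: "0 \<le> D" and hyp: "\<forall>v\<in>K. cmod (a u v) \<le> D * norm v"
  define s where "s u' = Sup (insert 0 {cmod (a u' v) / (norm u' * norm v) | v. v \<in> K \<and> v \<noteq> 0})"
    for u'
  show "inf_sup_left a K * norm u \<le> D"
  proof (cases "u = 0")
    case False
    have "cmod (a u' v) / (norm u' * norm v) \<le> C" for u' v
      using bound[of u' v] C by (cases "u' = 0 \<or> v = 0") (auto simp: pos_divide_le_eq mult.assoc)
    then have s_nonneg: "0 \<le> s u'" for u'
      unfolding s_def by (intro Sup_quotients_nonneg bdd_aboveI[of _ C]) auto
    have "inf_sup_left a K \<le> s u"
      unfolding inf_sup_left_def s_def[symmetric]
      using u False s_nonneg by (intro cInf_lower bdd_belowI[of _ 0]) auto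
    also have "s u \<le> D / norm u"
      unfolding s_def using hyp D False
      by (intro Sup_quotients_le) (auto simp: mult_ac)
    finally show ?thesis using False by (simp add: le_divide_eq)
  qed (use D in simp)
qed

lemma inf_sup_right_adjoint: "inf_sup_right a K = inf_sup_left (adjoint_form a) K"
  unfolding inf_sup_right_def inf_sup_left_def adjoint_form_def by (simp add: mult.commute)

section \<open>The off-diagonal bound\<close>

text \<open>An antilinear functional with values \<open>p\<close>, \<open>q\<close> at orthogonal vectors \<open>x\<close>, \<open>y\<close> has norm at
  least \<open>sqrt ((|p|/\<parallel>x\<parallel>)\<^sup>2 + (|q|/\<parallel>y\<parallel>)\<^sup>2)\<close> on their span: test it against
  \<open>s x + t y\<close> with \<open>s = p/\<parallel>x\<parallel>\<^sup>2\<close>, \<open>t = q/\<parallel>y\<parallel>\<^sup>2\<close>.\<close>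
lemma orthogonal_pair_bound:
  fixes x y :: "'a::complex_inner"
  assumes orth: "cinner x y = 0" and x: "x \<noteq> 0" and y: "y \<noteq> 0"
    and bound: "\<And>s t. cmod (cnj s * p + cnj t * q) \<le> C * norm (scaleC s x + scaleC t y)"
  shows "(cmod p / norm x)\<^sup>2 + (cmod q / norm y)\<^sup>2 \<le> C\<^sup>2"
proof -
  define S where "S = (cmod p / norm x)\<^sup>2 + (cmod q / norm y)\<^sup>2"
  have S: "S \<ge> 0" by (simp add: S_def)
  define s where "s = p / complex_of_real ((norm x)\<^sup>2)"
  define t where "t = q / complex_of_real ((norm y)\<^sup>2)"
  have norms: "norm x > 0" "norm y > 0" using x y by auto
  have "cnj s * p + cnj t * q = complex_of_real S"
    using norms
    by (simp add: s_def t_def S_def cnj_mult_self field_simps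
        mult.assoc[symmetric] mult_cnj_self)
  then have lhs: "cmod (cnj s * p + cnj t * q) = S" using S by simp
  have "cinner (scaleC s x) (scaleC t y) = 0"
    by (simp add: cinner_scaleC_left cinner_scaleC_right orth)
  then have "(norm (scaleC s x + scaleC t y))\<^sup>2 = (cmod s * norm x)\<^sup>2 + (cmod t * norm y)\<^sup>2"
    by (simp add: pythagoras norm_scaleC)
  also have "cmod s * norm x = cmod p / norm x"
    using norms by (simp add: s_def norm_divide norm_mult power2_eq_square)
  also have "cmod t * norm y = cmod q / norm y"
    using norms by (simp add: t_def norm_divide norm_mult power2_eq_square)
  finally have "norm (scaleC s x + scaleC t y) = sqrt S" by (simp add: S_def real_sqrt_unique)
  with bound[of s t] lhs have "sqrt S * sqrt S \<le> C * sqrt S" using S by simp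
  then have "sqrt S \<le> C \<or> S = 0"
    using S by (metis mult_right_le_imp_le real_sqrt_gt_0_iff order_less_le)
  then show ?thesis
  proof
    assume "sqrt S \<le> C"
    then have "(sqrt S)\<^sup>2 \<le> C\<^sup>2" using S by (intro power_mono) auto
    then show ?thesis using S by (simp add: S_def)
  next
    assume "S = 0"
    then show ?thesis unfolding S_def[symmetric] by simp
  qed
qed

text \<open>If \<open>|a(u,v)| = P \<parallel>v\<parallel>\<close> for some \<open>v \<perp> V\<^sub>0\<close>, then the remaining "budget" of \<open>a(u,\<cdot>)\<close> on \<open>V\<^sub>0\<close>
  is \<open>sqrt((C\<parallel>u\<parallel>)\<^sup>2 - P\<^sup>2)\<close>: apply the previous lemma to \<open>v\<close> and \<open>w \<in> V\<^sub>0\<close>.\<close>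
lemma remaining_bound_on_complement:
  fixes a :: "'a::complex_inner \<Rightarrow> 'a \<Rightarrow> complex"
  assumes anti: "antilinear_on UNIV (a u)"
    and bound: "\<And>v. cmod (a u v) \<le> C * norm u * norm v"
    and v: "v \<in> orth_compl V0" "v \<noteq> 0" and w: "w \<in> V0"
  shows "cmod (a u w) \<le> sqrt ((C * norm u)\<^sup>2 - (cmod (a u v) / norm v)\<^sup>2) * norm w"
proof (cases "w = 0")
  case True
  then show ?thesis using antilinear_on_zero[OF anti] by simp
next
  case False
  have "(cmod (a u v) / norm v)\<^sup>2 + (cmod (a u w) / norm w)\<^sup>2 \<le> (C * norm u)\<^sup>2"
  proof (rule orthogonal_pair_bound)
    show "cinner v w = 0" using v w by (simp add: orth_compl_def)
    fix s t
    show "cmod (cnj s * a u v + cnj t * a u w) \<le> C * norm u * norm (scaleC s v + scaleC t w)"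
      using bound[of "scaleC s v + scaleC t w"] anti by (simp add: antilinear_on_def)
  qed (use v False in auto)
  then have "cmod (a u w) / norm w \<le> sqrt ((C * norm u)\<^sup>2 - (cmod (a u v) / norm v)\<^sup>2)"
    by (intro real_le_rsqrt) simp
  then show ?thesis using False by (simp add: pos_divide_le_eq)
qed

text \<open>The off-diagonal bound: for \<open>u\<close> in a subspace \<open>V\<^sub>0\<close> on which a satisfies the inf-sup
  condition with constant \<open>\<alpha>\<close>, and \<open>v \<perp> V\<^sub>0\<close>, the functional \<open>a(u,\<cdot>)\<close> has norm \<open>\<le> C\<parallel>u\<parallel>\<close>
  on \<open>span{v} \<oplus> V\<^sub>0\<close> and \<open>\<ge> \<alpha>\<parallel>u\<parallel>\<close> on \<open>V\<^sub>0\<close>, hence by orthogonality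
  \<open>|a(u,v)| \<le> sqrt(C\<^sup>2 - \<alpha>\<^sup>2) \<parallel>u\<parallel> \<parallel>v\<parallel>\<close>.\<close>
lemma off_diagonal_bound:
  fixes a :: "'a::complex_inner \<Rightarrow> 'a \<Rightarrow> complex"
  assumes anti: "antilinear_on UNIV (a u)"
    and bound: "\<And>v. cmod (a u v) \<le> C * norm u * norm v"
    and inf_sup: "inf_sup_bound a V0 \<alpha>" and alpha: "0 \<le> \<alpha>"
    and u: "u \<in> V0" and v: "v \<in> orth_compl V0"
  shows "cmod (a u v) \<le> sqrt (C\<^sup>2 - \<alpha>\<^sup>2) * norm u * norm v"
proof (cases "u = 0 \<or> v = 0")
  case True
  then show ?thesis using bound[of v] antilinear_on_zero[OF anti] by auto
next
  case False
  then have u0: "u \<noteq> 0" and v0: "v \<noteq> 0" by auto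
  define P where "P = cmod (a u v) / norm v"
  have "0 \<le> P" "P \<le> C * norm u"
    using bound[of v] v0 by (auto simp: P_def pos_divide_le_eq)
  then have P_le: "P\<^sup>2 \<le> (C * norm u)\<^sup>2" by (intro power_mono)
  have "\<alpha> * norm u \<le> sqrt ((C * norm u)\<^sup>2 - P\<^sup>2)"
    by (rule inf_sup_boundD[OF inf_sup u])
      (use P_le remaining_bound_on_complement[where a = a and u = u, OF anti bound v v0]
        in \<open>auto simp: P_def\<close>)
  then have "(\<alpha> * norm u)\<^sup>2 \<le> (C * norm u)\<^sup>2 - P\<^sup>2"
    using alpha P_le
    by (metis diff_ge_0_iff_ge mult_nonneg_nonneg norm_ge_zero power_mono real_sqrt_pow2)
  then have P_sq: "P\<^sup>2 \<le> (C\<^sup>2 - \<alpha>\<^sup>2) * (norm u)\<^sup>2" by (simp add: algebra_simps)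
  then have "0 \<le> (C\<^sup>2 - \<alpha>\<^sup>2) * (norm u)\<^sup>2" by (rule order_trans[OF zero_le_power2])
  then have nonneg: "0 \<le> C\<^sup>2 - \<alpha>\<^sup>2" using u0 by (simp add: zero_le_mult_iff)
  have "(cmod (a u v))\<^sup>2 \<le> (sqrt (C\<^sup>2 - \<alpha>\<^sup>2) * norm u * norm v)\<^sup>2"
    using P_sq v0 nonneg by (simp add: P_def field_simps)
  then show ?thesis by (rule power2_le_imp_le) (use nonneg in simp)
qed

locale inf_sup_setting =
  fixes a :: "'a::chilbert_space \<Rightarrow> 'a \<Rightarrow> complex" and V0 :: "'a set" and C \<alpha> :: real
  assumes sesquilinear: "bounded_op_to_dual a"
    and subspace: "csubspace V0" and closed: "seqclosed V0" and nontrivial: "V0 \<noteq> {0}"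
    and bound: "\<And>u v. cmod (a u v) \<le> C * norm u * norm v"
    and left_inf_sup: "inf_sup_bound a V0 \<alpha>"
    and right_inf_sup: "inf_sup_bound (adjoint_form a) V0 \<alpha>"
    and alpha_pos: "0 < \<alpha>"
begin

lemma A00_inv_solves:
  assumes "antilinear_on V0 f" and "bounded_on V0 f"
  shows "A00_inv a V0 f \<in> V0" and "\<And>v. v \<in> V0 \<Longrightarrow> a (A00_inv a V0 f) v = f v"
proof -
  obtain u where u: "u \<in> V0" "\<forall>v\<in>V0. a u v = f v"
    using inf_sup_solvable[OF sesquilinear subspace closed left_inf_sup right_inf_sup alpha_pos
        assms] by blast
  have "A00_inv a V0 f = u" unfolding A00_inv_def
  proof (rule the_equality)
    fix u' assume u': "u' \<in> V0 \<and> (\<forall>v\<in>V0. a u' v = f v)"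
    have "u' - u = 0"
      by (rule inf_sup_bound_injective[OF left_inf_sup alpha_pos])
        (use u u' csubspace_diff[OF subspace] in \<open>auto simp: bounded_op_diff_left[OF sesquilinear]\<close>)
    then show "u' = u" by simp
  qed (use u in blast)
  then show "A00_inv a V0 f \<in> V0" and "\<And>v. v \<in> V0 \<Longrightarrow> a (A00_inv a V0 f) v = f v"
    using u by auto
qed

text \<open>Testing the inf-sup condition with a nonzero \<open>u \<in> V\<^sub>0\<close> against the bound gives \<open>\<alpha> \<le> C\<close>.\<close>
lemma alpha_le_bound: "\<alpha> \<le> C"
proof -
  obtain u where u: "u \<in> V0" "u \<noteq> 0" using nontrivial csubspace_zero[OF subspace] by blast
  have "0 \<le> C * norm u * norm u" using bound[of u u] by (rule order_trans[rotated]) simp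
  then have "0 \<le> C * norm u" using u by (simp add: zero_le_mult_iff)
  then have "\<alpha> * norm u \<le> C * norm u"
    by (rule inf_sup_boundD[OF left_inf_sup u(1)]) (use bound[of u] in \<open>simp add: mult_ac\<close>)
  then show ?thesis using u by simp
qed

lemma bound_nonneg: "0 \<le> C"
  using alpha_le_bound alpha_pos by simp

lemma ratio_constant: "sqrt (C\<^sup>2 / \<alpha>\<^sup>2 - 1) = sqrt (C\<^sup>2 - \<alpha>\<^sup>2) / \<alpha>"
proof -
  have "C\<^sup>2 / \<alpha>\<^sup>2 - 1 = (C\<^sup>2 - \<alpha>\<^sup>2) / \<alpha>\<^sup>2" using alpha_pos by (simp add: field_simps)
  then show ?thesis using alpha_pos by (simp add: real_sqrt_divide)
qed

lemma gap_nonneg: "0 \<le> sqrt (C\<^sup>2 - \<alpha>\<^sup>2)"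
  using alpha_le_bound alpha_pos by (simp add: power_mono)

text \<open>The off-diagonal bound in both directions; the second is the first for the
  adjoint form.\<close>
lemma off_diagonal_V0_V1:
  "u \<in> V0 \<Longrightarrow> v \<in> orth_compl V0 \<Longrightarrow> cmod (a u v) \<le> sqrt (C\<^sup>2 - \<alpha>\<^sup>2) * norm u * norm v"
  by (rule off_diagonal_bound[OF bounded_op_antilinear[OF sesquilinear] bound left_inf_sup])
    (use alpha_pos in auto)

lemma off_diagonal_V1_V0:
  assumes "u \<in> orth_compl V0" and "v \<in> V0"
  shows "cmod (a u v) \<le> sqrt (C\<^sup>2 - \<alpha>\<^sup>2) * norm u * norm v"
proof -
  have "cmod (adjoint_form a v u) \<le> sqrt (C\<^sup>2 - \<alpha>\<^sup>2) * norm v * norm u"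
  proof (rule off_diagonal_bound[OF _ _ right_inf_sup])
    show "antilinear_on UNIV (adjoint_form a v)"
      by (rule bounded_op_antilinear[OF adjoint_form_bounded_op[OF sesquilinear]])
    show "cmod (adjoint_form a v w) \<le> C * norm v * norm w" for w
      using bound[of w v] by (simp add: adjoint_form_def mult_ac)
  qed (use assms alpha_pos in auto)
  then show ?thesis by (simp add: adjoint_form_def mult_ac)
qed

text \<open>Estimate for \<open>A\<^sub>1\<^sub>0 A\<^sub>0\<^sub>0\<^sup>-\<^sup>1\<close>: for \<open>u = A\<^sub>0\<^sub>0\<^sup>-\<^sup>1 f\<close> we have \<open>\<alpha>\<parallel>u\<parallel> \<le> \<parallel>f\<parallel>\<close>,
  and \<open>a(u,\<cdot>)\<close> on \<open>V\<^sub>1\<close> is controlled by the off-diagonal bound.\<close>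
lemma estimate_A10_A00_inv:
  "opnorm_dual_dual V0 (orth_compl V0) (\<lambda>f v. a (A00_inv a V0 f) v) \<le> sqrt (C\<^sup>2 / \<alpha>\<^sup>2 - 1)"
  unfolding opnorm_dual_dual_def
proof (rule Sup_quotients_le)
  fix f assume f: "f \<in> dual_space V0 \<and> dual_norm V0 f \<noteq> 0"
  then show "0 < dual_norm V0 f" using dual_norm_nonneg[of f V0] by simp
  define D where "D = dual_norm V0 f"
  have f_anti: "antilinear_on V0 f" and f_bdd: "bounded_on V0 f"
    using f by (auto simp: dual_space_def)
  define u where "u = A00_inv a V0 f"
  have u: "u \<in> V0" and u_solves: "\<And>v. v \<in> V0 \<Longrightarrow> a u v = f v"
    unfolding u_def by (rule A00_inv_solves[OF f_anti f_bdd])+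
  have "\<alpha> * norm u \<le> D"
    by (rule inf_sup_boundD[OF left_inf_sup u])
      (use f in \<open>auto simp: D_def u_solves dual_norm_nonneg dual_norm_bound
        csubspace_zero[OF subspace]\<close>)
  then have "norm u \<le> D / \<alpha>" using alpha_pos by (simp add: field_simps)
  have "cmod (a u v) \<le> sqrt (C\<^sup>2 / \<alpha>\<^sup>2 - 1) * D * norm v" if v: "v \<in> orth_compl V0" for v
  proof -
    have "cmod (a u v) \<le> sqrt (C\<^sup>2 - \<alpha>\<^sup>2) * norm u * norm v" by (rule off_diagonal_V0_V1[OF u v])
    also have "\<dots> \<le> sqrt (C\<^sup>2 - \<alpha>\<^sup>2) * (D / \<alpha>) * norm v"
      using \<open>norm u \<le> D / \<alpha>\<close> gap_nonneg by (intro mult_right_mono mult_left_mono) auto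
    finally show ?thesis by (simp add: ratio_constant)
  qed
  then show "dual_norm (orth_compl V0) (a (A00_inv a V0 f)) \<le> sqrt (C\<^sup>2 / \<alpha>\<^sup>2 - 1) * dual_norm V0 f"
    using dual_norm_nonneg[of f V0] f gap_nonneg alpha_pos
    by (intro dual_norm_le) (auto simp: u_def D_def ratio_constant mult_ac)
qed (use gap_nonneg alpha_pos ratio_constant in simp)

text \<open>For \<open>u \<in> V\<^sub>1\<close>, the solution \<open>w = A\<^sub>0\<^sub>0\<^sup>-\<^sup>1 A\<^sub>0\<^sub>1 u\<close> satisfies \<open>\<alpha>\<parallel>w\<parallel> \<le> sqrt(C\<^sup>2 - \<alpha>\<^sup>2)\<parallel>u\<parallel>\<close>,
  again by the off-diagonal bound.\<close>
lemma A00_inv_A01_bound: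
  assumes u: "u \<in> orth_compl V0"
  defines "w \<equiv> A00_inv a V0 (a u)"
  shows "w \<in> V0" and "\<alpha> * norm w \<le> sqrt (C\<^sup>2 - \<alpha>\<^sup>2) * norm u"
proof -
  have "bounded_on V0 (a u)" unfolding bounded_on_def
    using bound[of u] by (intro exI[of _ "C * norm u"]) auto
  then have w: "w \<in> V0" and w_solves: "\<And>v. v \<in> V0 \<Longrightarrow> a w v = a u v"
    unfolding w_def by (rule A00_inv_solves[OF bounded_op_antilinear[OF sesquilinear]])+
  show "w \<in> V0" by (rule w)
  show "\<alpha> * norm w \<le> sqrt (C\<^sup>2 - \<alpha>\<^sup>2) * norm u"
    by (rule inf_sup_boundD[OF left_inf_sup w])
      (use gap_nonneg off_diagonal_V1_V0[OF u] w_solves in \<open>auto simp: mult_ac\<close>)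
qed

lemma estimate_A00_inv_A01:
  "opnorm_sp_sp (orth_compl V0) (\<lambda>u. A00_inv a V0 (\<lambda>v. a u v)) \<le> sqrt (C\<^sup>2 / \<alpha>\<^sup>2 - 1)"
  unfolding opnorm_sp_sp_def
proof (rule Sup_quotients_le)
  fix u assume u: "u \<in> orth_compl V0 \<and> u \<noteq> 0"
  then show "0 < norm u" by simp
  show "norm (A00_inv a V0 (a u)) \<le> sqrt (C\<^sup>2 / \<alpha>\<^sup>2 - 1) * norm u"
    unfolding ratio_constant using A00_inv_A01_bound(2)[of u] u alpha_pos by (simp add: field_simps)
qed (use gap_nonneg alpha_pos ratio_constant in simp)

text \<open>Estimate for the Schur complement: \<open>u - w\<close> with \<open>w \<in> V\<^sub>0\<close>, \<open>u \<perp> V\<^sub>0\<close>, so by Pythagoras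
  \<open>\<parallel>u - w\<parallel>\<^sup>2 = \<parallel>u\<parallel>\<^sup>2 + \<parallel>w\<parallel>\<^sup>2 \<le> (C/\<alpha>)\<^sup>2 \<parallel>u\<parallel>\<^sup>2\<close>, and \<open>(A\<^sub>1\<^sub>1 - A\<^sub>1\<^sub>0A\<^sub>0\<^sub>0\<^sup>-\<^sup>1A\<^sub>0\<^sub>1)u = a(u - w, \<cdot>)\<close>.\<close>
lemma schur_complement_bound:
  assumes u: "u \<in> orth_compl V0"
  defines "w \<equiv> A00_inv a V0 (a u)"
  shows "cmod (a u v - a w v) \<le> C\<^sup>2 / \<alpha> * norm u * norm v"
proof -
  have w: "w \<in> V0" and w_bound: "\<alpha> * norm w \<le> sqrt (C\<^sup>2 - \<alpha>\<^sup>2) * norm u"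
    unfolding w_def by (rule A00_inv_A01_bound[OF u])+
  have "(\<alpha> * norm w)\<^sup>2 \<le> (sqrt (C\<^sup>2 - \<alpha>\<^sup>2) * norm u)\<^sup>2"
    using w_bound alpha_pos by (intro power_mono) auto
  then have "\<alpha>\<^sup>2 * (norm w)\<^sup>2 \<le> (C\<^sup>2 - \<alpha>\<^sup>2) * (norm u)\<^sup>2"
    using alpha_le_bound alpha_pos by (simp add: power_mult_distrib power_mono)
  then have w_sq: "(norm w)\<^sup>2 \<le> (C\<^sup>2 / \<alpha>\<^sup>2 - 1) * (norm u)\<^sup>2"
    using alpha_pos by (simp add: field_simps)
  have "cinner u (- w) = 0" using u w by (simp add: orth_compl_def cinner_minus_right)
  then have "(norm (u - w))\<^sup>2 = (norm u)\<^sup>2 + (norm w)\<^sup>2" using pythagoras[of u "- w"] by simp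
  also have "\<dots> \<le> (C / \<alpha> * norm u)\<^sup>2"
    using w_sq by (simp add: power_divide algebra_simps)
  finally have "norm (u - w) \<le> C / \<alpha> * norm u"
    by (rule power2_le_imp_le) (use alpha_pos bound_nonneg in simp)
  have "cmod (a u v - a w v) \<le> C * norm (u - w) * norm v"
    using bound[of "u - w" v] by (simp add: bounded_op_diff_left[OF sesquilinear])
  also have "\<dots> \<le> C * (C / \<alpha> * norm u) * norm v"
    using \<open>norm (u - w) \<le> _\<close> bound_nonneg by (intro mult_right_mono mult_left_mono) auto
  finally show ?thesis by (simp add: power2_eq_square)
qed

lemma estimate_schur_complement:
  "opnorm_sp_dual (orth_compl V0) (orth_compl V0)
     (\<lambda>u v. a u v - a (A00_inv a V0 (\<lambda>w. a u w)) v) \<le> C\<^sup>2 / \<alpha>"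
  unfolding opnorm_sp_dual_def
proof (rule Sup_quotients_le)
  fix u assume u: "u \<in> orth_compl V0 \<and> u \<noteq> 0"
  then show "0 < norm u" by simp
  show "dual_norm (orth_compl V0) (\<lambda>v. a u v - a (A00_inv a V0 (a u)) v) \<le> C\<^sup>2 / \<alpha> * norm u"
    using schur_complement_bound[of u] u alpha_pos by (intro dual_norm_le) auto
qed (use alpha_pos in simp)

end


theorem lemma1:
  fixes A :: "'v::chilbert_space \<Rightarrow> 'v \<Rightarrow> complex"
    and B :: "'v \<Rightarrow> 'q::chilbert_space \<Rightarrow> complex"
    and V0 V1 :: "'v set"
  assumes A_bdd: "bounded_op_to_dual A"
    and B_bdd: "bounded_op_to_dual B"
    and a_finite: "bdd_above (form_quotients A)"
    and alpha_eq: "inf_sup_left A (ker_op B) = inf_sup_right A (ker_op B)"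
    and alpha_pos: "inf_sup_left A (ker_op B) > 0"
    and ker_nontriv: "ker_op B \<noteq> {0}"
    and V0_def: "V0 = ker_op B"
    and V1_def: "V1 = orth_compl V0"
  shows "opnorm_dual_dual V0 V1 (\<lambda>f v. A (A00_inv A V0 f) v)
           \<le> sqrt ((form_norm A)\<^sup>2 / (inf_sup_left A V0)\<^sup>2 - 1)
     \<and> opnorm_sp_sp V1 (\<lambda>u. A00_inv A V0 (\<lambda>v. A u v))
           \<le> sqrt ((form_norm A)\<^sup>2 / (inf_sup_left A V0)\<^sup>2 - 1)
     \<and> opnorm_sp_dual V1 V1 (\<lambda>u v. A u v - A (A00_inv A V0 (\<lambda>w. A u w)) v)
           \<le> (form_norm A)\<^sup>2 / inf_sup_left A V0"
proof -
  have bound: "\<And>u v. cmod (A u v) \<le> form_norm A * norm u * norm v"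
    by (rule form_norm_bound[OF A_bdd a_finite])
  have adjoint_bound: "cmod (adjoint_form A u v) \<le> form_norm A * norm u * norm v" for u v
    using bound[of v u] by (simp add: adjoint_form_def mult_ac)
  interpret inf_sup_setting A V0 "form_norm A" "inf_sup_left A V0"
  proof
    show "csubspace V0" "seqclosed V0"
      unfolding V0_def by (rule ker_op_closed_subspace[OF B_bdd])+
    show "inf_sup_bound A V0 (inf_sup_left A V0)"
      by (rule inf_sup_left_bound[OF form_norm_nonneg[OF a_finite] bound])
    have "inf_sup_left A V0 = inf_sup_left (adjoint_form A) V0"
      using alpha_eq by (simp add: V0_def inf_sup_right_adjoint)
    then show "inf_sup_bound (adjoint_form A) V0 (inf_sup_left A V0)"
      using inf_sup_left_bound[OF form_norm_nonneg[OF a_finite] adjoint_bound] by simp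
  qed (use A_bdd bound alpha_pos ker_nontriv V0_def in auto)
  show ?thesis
    using estimate_A10_A00_inv estimate_A00_inv_A01 estimate_schur_complement
    unfolding V1_def by simp
qed

end
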